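(* Let $r\geq 3$, let $D$ be an $m$-colored semicomplete $r$-partite digraph, let $k\in\{2,3\}$, and let $x,y$ be distinct vertices of $D$. Suppose there exists a directed path from $x$ to $y$ in $D$ that uses exactly $k$ colors, and there is no directed path from $y$ to $x$ in $D$ using at most $k$ colors. Then $d(x,y)\leq 4$.
   Context: A semicomplete $r$-partite digraph ($r\ge 2$) is a digraph whose vertex set is partitioned into $r$ nonempty independent sets (partite sets) such that for any two vertices $u,v$ in different partite sets at least one of the arcs $(u,v)$, $(v,u)$ is present (both may be present); there are no arcs inside a partite set. An $m$-colored digraph is a digraph whose arcs are each assigned one of $m$ colors. A directed path (no repeated vertices) is $j$-colored if its arcs use exactly $j$ distinct colors; it uses at most $k$ colors if it is $j$-colored for some $1\le j\le k$. $d(x,y)$ denotes the minimum number of arcs of a directed path from $x$ to $y$. *)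

theory Defs
  imports Main
begin

text \<open>A digraph on vertex set V with arc set A (pairs), partite sets given by a
partition function part : V -> {0..<r} which is onto (partite sets nonempty).\<close>

definition semicomplete_multipartite ::
  "'a set \<Rightarrow> ('a \<times> 'a) set \<Rightarrow> ('a \<Rightarrow> nat) \<Rightarrow> nat \<Rightarrow> bool" where
  "semicomplete_multipartite V A part r \<longleftrightarrow>
     finite V \<and> r \<ge> 2 \<and>
     A \<subseteq> V \<times> V \<and>
     part ` V = {0..<r} \<and>
     (\<forall>(u,v)\<in>A. part u \<noteq> part v) \<and>
     (\<forall>u\<in>V. \<forall>v\<in>V. part u \<noteq> part v \<longrightarrow> (u,v) \<in> A \<or> (v,u) \<in> A)"

definition m_colored :: "('a \<times> 'a) set \<Rightarrow> ('a \<times> 'a \<Rightarrow> nat) \<Rightarrow> nat \<Rightarrow> bool" where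
  "m_colored A col m \<longleftrightarrow> (\<forall>e\<in>A. col e < m)"

definition dpath :: "('a \<times> 'a) set \<Rightarrow> 'a list \<Rightarrow> 'a \<Rightarrow> 'a \<Rightarrow> bool" where
  "dpath A p x y \<longleftrightarrow> p \<noteq> [] \<and> hd p = x \<and> last p = y \<and> distinct p \<and>
     (\<forall>i. Suc i < length p \<longrightarrow> (p ! i, p ! Suc i) \<in> A)"

definition path_arcs :: "'a list \<Rightarrow> ('a \<times> 'a) list" where
  "path_arcs p = zip (butlast p) (tl p)"

definition num_colors :: "('a \<times> 'a \<Rightarrow> nat) \<Rightarrow> 'a list \<Rightarrow> nat" where
  "num_colors col p = card (col ` set (path_arcs p))"

definition dist :: "('a \<times> 'a) set \<Rightarrow> 'a \<Rightarrow> 'a \<Rightarrow> nat" where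
  "dist A x y = (LEAST n. \<exists>p. dpath A p x y \<and> length p = Suc n)"

end

theory Submission
  imports Defs
begin

(*
  A path of at most two arcs uses at
  most two colors, so there is neither an arc y -> x nor a 2-path y -> z -> x.

  The proof works with walks (vertex repetitions allowed) and shortens them to
  paths at the end.  If x -> y is an arc we are done.  Otherwise x and y lie in
  the same partite set (else y -> x would be an arc), and then every vertex v
  outside that partite set which does not dominate y is dominated by x: indeed
  y -> v, so v -> x would close a forbidden 2-path.  Along the given x-y path
  let b be the first vertex dominating y and v its predecessor.  Either v lies
  outside the partite set of x (walk x v b y), or v = x (walk x b y), or v is
  in the partite set of x and its predecessor u is not (walk x u v b y).  In
  all cases a walk with at most four arcs exists, hence d(x,y) <= 4.
  The argument only needs k >= 2 and some x-y path.
*)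

definition walk :: "('a \<times> 'a) set \<Rightarrow> 'a list \<Rightarrow> 'a \<Rightarrow> 'a \<Rightarrow> bool" where
  "walk A w x y \<longleftrightarrow> w \<noteq> [] \<and> hd w = x \<and> last w = y \<and> successively (\<lambda>u v. (u, v) \<in> A) w"

lemma dpath_iff_walk: "dpath A p x y \<longleftrightarrow> walk A p x y \<and> distinct p"
  unfolding dpath_def walk_def successively_conv_nth by auto

text \<open>Cutting out the closed subwalk between two occurrences of a vertex
  leaves a walk; iterating this turns every walk into a path no longer than it.\<close>
lemma walk_to_dpath:
  assumes "walk A w x y"
  shows "\<exists>p. dpath A p x y \<and> length p \<le> length w"
  using assms
proof (induction "length w" arbitrary: w rule: less_induct)
  case less
  show ?case
  proof (cases "distinct w")
    case True
    then show ?thesis using less.prems by (auto simp: dpath_iff_walk)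
  next
    case False
    then obtain xs a ys zs where w: "w = xs @ a # ys @ a # zs"
      using not_distinct_decomp by fastforce
    let ?w' = "xs @ a # zs"
    have "successively (\<lambda>u v. (u, v) \<in> A) ?w'"
      using less.prems unfolding walk_def w
      by (auto simp: successively_append_iff successively_Cons)
    moreover have "hd ?w' = hd w" "last ?w' = last w"
      unfolding w by (cases xs; simp)+
    ultimately have "walk A ?w' x y"
      using less.prems unfolding walk_def by auto
    moreover have "length ?w' < length w" unfolding w by simp
    ultimately show ?thesis using less.hyps by fastforce
  qed
qed

lemma dist_le_of_dpath:
  assumes "dpath A p x y"
  shows "dist A x y \<le> length p - 1"
proof -
  have "p \<noteq> []" using assms unfolding dpath_def by simp
  then show ?thesis
    unfolding dist_def using assms by (intro Least_le) (auto intro!: exI[of _ p])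
qed

lemma dist_le_of_walk:
  assumes "walk A w x y"
  shows "dist A x y \<le> length w - 1"
proof -
  obtain p where "dpath A p x y" "length p \<le> length w"
    using walk_to_dpath[OF assms] by blast
  then show ?thesis using dist_le_of_dpath[of A p x y] by linarith
qed

lemma walk_first_in_neighbour:
  assumes "walk A w x y" "x \<noteq> y"
  shows "\<exists>pre b. walk A (pre @ [b]) x b \<and> (b, y) \<in> A \<and> (\<forall>u\<in>set pre. (u, y) \<notin> A)"
  using assms
proof (induction w arbitrary: x)
  case Nil
  then show ?case by (simp add: walk_def)
next
  case (Cons x' w)
  then have x': "x' = x" by (simp add: walk_def)
  show ?case
  proof (cases "(x, y) \<in> A")
    case True
    then show ?thesis by (intro exI[of _ "[]"] exI[of _ x]) (simp add: walk_def)
  next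
    case False
    have "w \<noteq> []" using Cons.prems by (auto simp: walk_def)
    then obtain z where walk_z: "walk A w z y" and xz: "(x, z) \<in> A"
      using Cons.prems x' by (auto simp: walk_def successively_Cons)
    have "z \<noteq> y" using xz False by blast
    then obtain pre b where "walk A (pre @ [b]) z b" "(b, y) \<in> A" "\<forall>u\<in>set pre. (u, y) \<notin> A"
      using Cons.IH[OF walk_z] by blast
    moreover from this(1) have "walk A (x # pre @ [b]) x b"
      using xz by (auto simp: walk_def successively_Cons)
    ultimately show ?thesis using False
      by (intro exI[of _ "x # pre"] exI[of _ b]) auto
  qed
qed

lemma num_colors_one_arc: "num_colors col [a, b] = 1"
  by (simp add: num_colors_def path_arcs_def)

lemma num_colors_two_arcs: "1 \<le> num_colors col [a, b, c] \<and> num_colors col [a, b, c] \<le> 2"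
  by (auto simp: num_colors_def path_arcs_def card_insert_if)

lemma no_short_back_path:
  assumes "semicomplete_multipartite V A part r" "x \<noteq> y" "2 \<le> k"
    and no_back: "\<not> (\<exists>p. dpath A p y x \<and> 1 \<le> num_colors col p \<and> num_colors col p \<le> k)"
  shows "(y, x) \<notin> A" and "\<And>z. (y, z) \<in> A \<Longrightarrow> (z, x) \<notin> A"
proof -
  have loopfree: "\<And>u v. (u, v) \<in> A \<Longrightarrow> u \<noteq> v"
    using assms(1) unfolding semicomplete_multipartite_def by blast
  show "(y, x) \<notin> A"
  proof
    assume "(y, x) \<in> A"
    then have "dpath A [y, x] y x" using assms(2) by (simp add: dpath_def)
    moreover have "1 \<le> num_colors col [y, x]" "num_colors col [y, x] \<le> k"
      using assms(3) by (simp_all add: num_colors_one_arc)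
    ultimately show False using no_back by blast
  qed
  fix z assume yz: "(y, z) \<in> A"
  show "(z, x) \<notin> A"
  proof
    assume zx: "(z, x) \<in> A"
    have "dpath A [y, z, x] y x"
      using yz zx loopfree[OF yz] loopfree[OF zx] assms(2)
      by (auto simp: dpath_def less_Suc_eq nth_Cons split: nat.splits)
    then show False using no_back num_colors_two_arcs[of col y z x] assms(3) by auto
  qed
qed

lemma dominates_non_in_neighbours:
  assumes sc: "semicomplete_multipartite V A part r"
    and "x \<in> V" "y \<in> V" "part x = part y"
    and no_yx2: "\<And>z. (y, z) \<in> A \<Longrightarrow> (z, x) \<notin> A"
    and "v \<in> V" "part v \<noteq> part x" "(v, y) \<notin> A"
  shows "(x, v) \<in> A"
proof -
  have semi: "\<And>u w. u \<in> V \<Longrightarrow> w \<in> V \<Longrightarrow> part u \<noteq> part w \<Longrightarrow> (u, w) \<in> A \<or> (w, u) \<in> A"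
    using sc unfolding semicomplete_multipartite_def by blast
  have "(y, v) \<in> A" using semi[of v y] assms by auto
  then have "(v, x) \<notin> A" using no_yx2 by blast
  then show ?thesis using semi[of v x] assms by auto
qed

lemma short_walk:
  assumes sc: "semicomplete_multipartite V A part r"
    and "x \<in> V" "y \<in> V" "x \<noteq> y"
    and no_yx: "(y, x) \<notin> A" and no_yx2: "\<And>z. (y, z) \<in> A \<Longrightarrow> (z, x) \<notin> A"
    and "walk A w x y"
  shows "\<exists>q. walk A q x y \<and> length q \<le> 5"
proof (cases "(x, y) \<in> A")
  case True
  then show ?thesis by (intro exI[of _ "[x, y]"]) (simp add: walk_def)
next
  case no_xy: False
  have arc_props: "\<And>u v. (u, v) \<in> A \<Longrightarrow> u \<in> V \<and> part u \<noteq> part v"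
    using sc unfolding semicomplete_multipartite_def by blast
  have same_part: "part x = part y"
    using sc assms(2,3) no_xy no_yx unfolding semicomplete_multipartite_def by blast
  note dominates = dominates_non_in_neighbours[OF sc assms(2,3) same_part no_yx2]
  obtain pre b where walk_b: "walk A (pre @ [b]) x b" and b_y: "(b, y) \<in> A"
    and first: "\<forall>u\<in>set pre. (u, y) \<notin> A"
    using walk_first_in_neighbour[OF assms(7,4)] by blast
  have "pre \<noteq> []" using walk_b b_y no_xy by (auto simp: walk_def)
  then obtain pre' v where pre: "pre = pre' @ [v]" by (cases pre rule: rev_cases) auto
  have vb: "(v, b) \<in> A" and vy: "(v, y) \<notin> A"
    using walk_b first unfolding pre walk_def by (auto simp: successively_append_iff)
  consider (other_part) "part v \<noteq> part x" | (is_x) "v = x" | (same_part_v) "part v = part x" "v \<noteq> x"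
    by blast
  then show ?thesis
  proof cases
    case other_part
    then have "(x, v) \<in> A" using dominates arc_props vb vy by blast
    then show ?thesis using vb b_y by (intro exI[of _ "[x, v, b, y]"]) (simp add: walk_def)
  next
    case is_x
    then show ?thesis using vb b_y by (intro exI[of _ "[x, b, y]"]) (simp add: walk_def)
  next
    case same_part_v
    have "pre' \<noteq> []" using walk_b same_part_v(2) unfolding pre walk_def by auto
    then obtain pre'' u where pre': "pre' = pre'' @ [u]" by (cases pre' rule: rev_cases) auto
    have uv: "(u, v) \<in> A" and uy: "(u, y) \<notin> A"
      using walk_b first unfolding pre pre' walk_def by (auto simp: successively_append_iff)
    have "(x, u) \<in> A" using dominates arc_props[OF uv] uy same_part_v(1) by auto
    then show ?thesis using uv vb b_y by (intro exI[of _ "[x, u, v, b, y]"]) (simp add: walk_def)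
  qed
qed

theorem mainTheorem2:
  fixes V :: "'a set" and A :: "('a \<times> 'a) set" and part :: "'a \<Rightarrow> nat"
    and col :: "'a \<times> 'a \<Rightarrow> nat" and r m k :: nat and x y :: 'a
  assumes "r \<ge> 3"
    and "semicomplete_multipartite V A part r"
    and "m_colored A col m"
    and "k \<in> {2, 3}"
    and "x \<in> V" and "y \<in> V" and "x \<noteq> y"
    and "\<exists>p. dpath A p x y \<and> num_colors col p = k"
    and "\<not> (\<exists>p. dpath A p y x \<and> 1 \<le> num_colors col p \<and> num_colors col p \<le> k)"
  shows "dist A x y \<le> 4"
proof -
  have "2 \<le> k" using assms(4) by auto
  note no_back = no_short_back_path[OF assms(2,7) this assms(9)]
  obtain p where "dpath A p x y" using assms(8) by blast
  then have "walk A p x y" by (simp add: dpath_iff_walk)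
  then obtain q where "walk A q x y" "length q \<le> 5"
    using short_walk[OF assms(2,5,6,7) no_back] by blast
  then show ?thesis using dist_le_of_walk[of A q x y] by linarith
qed

end
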